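(* There exists a continuous non-negative function $f$ on $[0,1)$ with $f(0)=0$ such that the following holds for every $n$. Let $0\le \mathcal{K}<1$ and let $\gamma:[a,b]\to\mathbb{H}^n$ be a unit speed path whose geodesic curvature satisfies $\kappa_\gamma(t)\le\mathcal{K}$ for all $t\in[a,b]$. Then $\gamma$ is a $\frac{1}{\sqrt{1-\mathcal{K}^2}}$-quasi-geodesic, and if $g_\gamma$ is the geodesic segment joining $\gamma(a)$ and $\gamma(b)$, then the Hausdorff distance between the image of $\gamma$ and the image of $g_\gamma$ is at most $f(\mathcal{K})$.
   Context: For a unit speed path $\gamma$ in a Riemannian manifold, the geodesic curvature is $\kappa_\gamma(t)=\big\|\frac{D\dot\gamma}{dt}(t)\big\|$, where $\frac{D}{dt}$ is the covariant derivative along $\gamma$. A map $\gamma:I\to X$ from an interval to a metric space is a $k$-quasi-geodesic if $\frac1k|s-t|\le d(\gamma(s),\gamma(t))\le k|s-t|$ for all $s,t\in I$. *)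

theory Defs
  imports "HOL-Analysis.Analysis"
begin

text \<open>Points of the ambient Minkowski
space R^{1,n} are functions nat => real with coordinates 0..n (coordinate 0 is
the time-like one) and all coordinates > n equal to zero.\<close>

definition mink :: "nat \<Rightarrow> (nat \<Rightarrow> real) \<Rightarrow> (nat \<Rightarrow> real) \<Rightarrow> real" where
  "mink n x y = - x 0 * y 0 + (\<Sum>i\<in>{1..n}. x i * y i)"

definition hyp_pt :: "nat \<Rightarrow> (nat \<Rightarrow> real) \<Rightarrow> bool" where
  "hyp_pt n x \<longleftrightarrow> (\<forall>i>n. x i = 0) \<and> mink n x x = -1 \<and> x 0 > 0"

definition hdist :: "nat \<Rightarrow> (nat \<Rightarrow> real) \<Rightarrow> (nat \<Rightarrow> real) \<Rightarrow> real" where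
  "hdist n x y = arcosh (- mink n x y)"

text \<open>Orthogonal projection (w.r.t. the Minkowski form) of an ambient vector w onto
the tangent space T_p H^n = {v. mink n v p = 0}; the Levi-Civita covariant
derivative of a vector field along a curve in H^n is the tangential projection of
the ambient derivative.\<close>
definition tang_proj :: "nat \<Rightarrow> (nat \<Rightarrow> real) \<Rightarrow> (nat \<Rightarrow> real) \<Rightarrow> (nat \<Rightarrow> real)" where
  "tang_proj n p w = (\<lambda>i. w i + mink n w p * p i)"

definition tnorm :: "nat \<Rightarrow> (nat \<Rightarrow> real) \<Rightarrow> real" where
  "tnorm n v = sqrt (mink n v v)"

definition geod_curv :: "nat \<Rightarrow> (real \<Rightarrow> nat \<Rightarrow> real) \<Rightarrow> (real \<Rightarrow> nat \<Rightarrow> real) \<Rightarrow> real \<Rightarrow> real" where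
  "geod_curv n \<gamma> \<gamma>'' t = tnorm n (tang_proj n (\<gamma> t) (\<gamma>'' t))"

definition quasi_geodesic :: "('a \<Rightarrow> 'a \<Rightarrow> real) \<Rightarrow> real \<Rightarrow> real set \<Rightarrow> (real \<Rightarrow> 'a) \<Rightarrow> bool" where
  "quasi_geodesic d k I \<gamma> \<longleftrightarrow>
     (\<forall>s\<in>I. \<forall>t\<in>I. (1/k) * \<bar>s - t\<bar> \<le> d (\<gamma> s) (\<gamma> t) \<and> d (\<gamma> s) (\<gamma> t) \<le> k * \<bar>s - t\<bar>)"

definition hyp_geodesic_segment :: "nat \<Rightarrow> (nat \<Rightarrow> real) \<Rightarrow> (nat \<Rightarrow> real) \<Rightarrow> (real \<Rightarrow> nat \<Rightarrow> real) \<Rightarrow> bool" where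
  "hyp_geodesic_segment n x y g \<longleftrightarrow>
     g 0 = x \<and> g (hdist n x y) = y \<and> (\<forall>s\<in>{0..hdist n x y}. hyp_pt n (g s)) \<and>
     (\<forall>s\<in>{0..hdist n x y}. \<forall>t\<in>{0..hdist n x y}. hdist n (g s) (g t) = \<bar>s - t\<bar>)"

definition hausdorff_dist_wrt :: "('a \<Rightarrow> 'a \<Rightarrow> real) \<Rightarrow> 'a set \<Rightarrow> 'a set \<Rightarrow> real" where
  "hausdorff_dist_wrt d A B =
     max (SUP p\<in>A. INF q\<in>B. d p q) (SUP q\<in>B. INF p\<in>A. d p q)"

end

theory Submission
  imports Defs
begin

text \<open>
  Everything is read off from height functions \<open>h t = \<langle>p, \<gamma> t\<rangle>\<close> of the curve in the
  hyperboloid model. The covariant acceleration \<open>\<gamma>'' - \<gamma>\<close> is orthogonal to \<open>\<gamma>\<close> and \<open>\<gamma>'\<close>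
  and has norm at most \<open>K\<close>, so \<open>(h'' - h)\<^sup>2 \<le> K\<^sup>2 (\<langle>p,p\<rangle> + h\<^sup>2 - h'\<^sup>2)\<close>.

  For a point \<open>p\<close> of the hyperboloid, \<open>-h = cosh (dist p \<gamma>)\<close>. Comparing with \<open>cosh\<close> shows that
  \<open>dist (\<gamma> s) (\<gamma> t)\<close> is at most \<open>|t - s|\<close> and, since the distance from a point keeps
  growing at rate at least \<open>\<mu>\<close> once it does so initially (for any \<open>\<mu>\<^sup>2 < 1 - K\<^sup>2\<close>), at least
  \<open>sqrt (1 - K\<^sup>2) |t - s|\<close>.

  For a spacelike unit vector \<open>p\<close>, a maximum principle bounds \<open>h\<close> by \<open>\<rho> = K / sqrt (1 - K\<^sup>2)\<close>
  on \<open>[a, b]\<close> as soon as \<open>h \<le> 0\<close> at both ends. Applied to the unit normals of the hyperplanes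
  containing the segment from \<open>\<gamma> a\<close> to \<open>\<gamma> b\<close> and of those orthogonal to it at its endpoints,
  this places every \<open>\<gamma> t\<close> within \<open>arcosh (sqrt (1 + 2 \<rho>\<^sup>2))\<close> of the segment. Conversely, the
  hyperplane orthogonal to the segment through any of its points separates \<open>\<gamma> a\<close> from \<open>\<gamma> b\<close>,
  so \<open>\<gamma>\<close> crosses it, and at the crossing the same bound applies.
\<close>

section \<open>Minkowski space and hyperbolic distance\<close>

lemma mink_commute: "mink n x y = mink n y x"
  unfolding mink_def by (simp add: mult.commute)

lemma mink_add_left [simp]: "mink n (\<lambda>i. f i + g i) z = mink n f z + mink n g z"
  unfolding mink_def by (simp add: sum.distrib algebra_simps)

lemma mink_add_right [simp]: "mink n z (\<lambda>i. f i + g i) = mink n z f + mink n z g"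
  unfolding mink_def by (simp add: sum.distrib algebra_simps)

lemma mink_diff_left [simp]: "mink n (\<lambda>i. f i - g i) z = mink n f z - mink n g z"
  unfolding mink_def by (simp add: sum_subtractf algebra_simps)

lemma mink_diff_right [simp]: "mink n z (\<lambda>i. f i - g i) = mink n z f - mink n z g"
  unfolding mink_def by (simp add: sum_subtractf algebra_simps)

lemma mink_minus_left [simp]: "mink n (\<lambda>i. - f i) z = - mink n f z"
  unfolding mink_def by (simp add: sum_negf)

lemma mink_minus_right [simp]: "mink n z (\<lambda>i. - f i) = - mink n z f"
  unfolding mink_def by (simp add: sum_negf)

lemma mink_mult_left [simp]: "mink n (\<lambda>i. c * f i) z = c * mink n f z"
  unfolding mink_def by (simp add: sum_distrib_left algebra_simps)

lemma mink_mult_right [simp]: "mink n z (\<lambda>i. c * f i) = c * mink n z f"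
  unfolding mink_def by (simp add: sum_distrib_left algebra_simps)

lemma mink_mult_left' [simp]: "mink n (\<lambda>i. f i * c) z = c * mink n f z"
  unfolding mink_def by (simp add: sum_distrib_left algebra_simps)

lemma mink_mult_right' [simp]: "mink n z (\<lambda>i. f i * c) = c * mink n z f"
  unfolding mink_def by (simp add: sum_distrib_left algebra_simps)

lemma mink_divide_left [simp]: "mink n (\<lambda>i. f i / c) z = mink n f z / c"
  unfolding mink_def by (simp add: sum_divide_distrib[symmetric] add_divide_distrib diff_divide_distrib)

lemma mink_divide_right [simp]: "mink n z (\<lambda>i. f i / c) = mink n z f / c"
  unfolding mink_def by (simp add: sum_divide_distrib[symmetric] add_divide_distrib diff_divide_distrib)

lemma mink_self_nonneg_if_orthogonal:
  assumes q: "mink n q q = -1" and vq: "mink n v q = 0"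
  shows "0 \<le> mink n v v"
proof -
  define Sv where "Sv = (\<Sum>i\<in>{1..n}. (v i)\<^sup>2)"
  define Sq where "Sq = (\<Sum>i\<in>{1..n}. (q i)\<^sup>2)"
  have Sq: "0 \<le> Sq" and Sv: "0 \<le> Sv"
    unfolding Sv_def Sq_def by (simp_all add: sum_nonneg)
  have "v 0 * q 0 = (\<Sum>i\<in>{1..n}. v i * q i)"
    using vq unfolding mink_def by simp
  moreover have "(\<Sum>i\<in>{1..n}. v i * q i)\<^sup>2 \<le> Sv * Sq"
    unfolding Sv_def Sq_def by (rule Cauchy_Schwarz_ineq_sum)
  moreover have "(q 0)\<^sup>2 = 1 + Sq"
    using q unfolding mink_def Sq_def by (simp add: power2_eq_square)
  ultimately have "(v 0)\<^sup>2 * (1 + Sq) \<le> Sv * Sq"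
    by (metis power_mult_distrib)
  also have "\<dots> \<le> Sv * (1 + Sq)"
    using Sv by (simp add: mult_left_mono)
  finally have "(v 0)\<^sup>2 * (1 + Sq) \<le> Sv * (1 + Sq)" .
  hence "(v 0)\<^sup>2 \<le> Sv"
    by (rule mult_right_le_imp_le) (use Sq in linarith)
  moreover have "mink n v v = Sv - (v 0)\<^sup>2"
    unfolding mink_def Sv_def by (simp add: power2_eq_square)
  ultimately show ?thesis by simp
qed

lemma quadratic_nonneg_imp_discriminant_le:
  fixes A B C :: real
  assumes nonneg: "\<And>l. 0 \<le> A + 2 * B * l + C * l\<^sup>2" and "0 \<le> C"
  shows "B\<^sup>2 \<le> A * C"
proof (cases "C = 0")
  case True
  show ?thesis
  proof (rule ccontr)
    assume "\<not> ?thesis"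
    hence "B \<noteq> 0" using True nonneg[of 0] by simp
    with True nonneg[of "-(A + 1) / (2 * B)"] show False by (simp add: field_simps)
  qed
next
  case False
  with \<open>0 \<le> C\<close> have C: "C > 0" by simp
  from nonneg[of "-B / C"] C have "0 \<le> A - B\<^sup>2 / C"
    by (simp add: field_simps power2_eq_square)
  with C show ?thesis by (simp add: field_simps)
qed

lemma mink_Cauchy_Schwarz_if_orthogonal:
  assumes q: "mink n q q = -1" and vq: "mink n v q = 0" and wq: "mink n w q = 0"
  shows "(mink n v w)\<^sup>2 \<le> mink n v v * mink n w w"
proof (rule quadratic_nonneg_imp_discriminant_le)
  fix l :: real
  have "mink n (\<lambda>i. v i + l * w i) q = 0" using vq wq by simp
  from mink_self_nonneg_if_orthogonal[OF q this]
  show "0 \<le> mink n v v + 2 * mink n v w * l + mink n w w * l\<^sup>2"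
    by (simp add: mink_commute[of n w v] algebra_simps power2_eq_square)
qed (rule mink_self_nonneg_if_orthogonal[OF q wq])

text \<open>For an orthonormal pair \<open>q\<close> (timelike) and \<open>v\<close> (spacelike), the quantity
  \<open>\<langle>p,p\<rangle> + \<langle>p,q\<rangle>\<^sup>2 - \<langle>p,v\<rangle>\<^sup>2\<close> is the squared norm of the component of \<open>p\<close> orthogonal to both.\<close>

lemma
  assumes q: "mink n q q = -1" and qv: "mink n q v = 0" and vv: "mink n v v = 1"
    and Tq: "mink n T q = 0" and Tv: "mink n T v = 0" and TT: "mink n T T \<le> K\<^sup>2"
  shows mink_sq_le_orthogonal_component:
      "(mink n p T)\<^sup>2 \<le> K\<^sup>2 * (mink n p p + (mink n p q)\<^sup>2 - (mink n p v)\<^sup>2)"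
    and orthogonal_component_nonneg: "0 \<le> mink n p p + (mink n p q)\<^sup>2 - (mink n p v)\<^sup>2"
proof -
  define w where "w = (\<lambda>i. p i + mink n p q * q i - mink n p v * v i)"
  have vq: "mink n v q = 0" and qT: "mink n q T = 0" "mink n v T = 0"
    using qv Tq Tv mink_commute by metis+
  have wq: "mink n w q = 0" unfolding w_def using q vq by simp
  have wT: "mink n w T = mink n p T" unfolding w_def using qT by simp
  have ww: "mink n w w = mink n p p + (mink n p q)\<^sup>2 - (mink n p v)\<^sup>2"
    unfolding w_def using q qv vq vv
    by (simp add: mink_commute[of n q p] mink_commute[of n v p] power2_eq_square algebra_simps)
  have w0: "0 \<le> mink n w w" by (rule mink_self_nonneg_if_orthogonal[OF q wq])
  have "(mink n w T)\<^sup>2 \<le> mink n w w * mink n T T"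
    by (rule mink_Cauchy_Schwarz_if_orthogonal[OF q wq Tq])
  also have "\<dots> \<le> mink n w w * K\<^sup>2" using w0 TT by (rule mult_left_mono[rotated])
  finally show "(mink n p T)\<^sup>2 \<le> K\<^sup>2 * (mink n p p + (mink n p q)\<^sup>2 - (mink n p v)\<^sup>2)"
    using wT ww by (simp add: mult.commute)
  show "0 \<le> mink n p p + (mink n p q)\<^sup>2 - (mink n p v)\<^sup>2" using w0 ww by simp
qed

lemma hyp_pt_time_ge_1:
  assumes "hyp_pt n x"
  shows "1 \<le> x 0"
proof -
  have "(x 0)\<^sup>2 = 1 + (\<Sum>i\<in>{1..n}. (x i)\<^sup>2)"
    using assms unfolding hyp_pt_def mink_def by (simp add: power2_eq_square)
  hence "1\<^sup>2 \<le> (x 0)\<^sup>2" by (simp add: sum_nonneg)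
  with assms show ?thesis unfolding hyp_pt_def by (auto intro: power2_le_imp_le)
qed

lemma reverse_Cauchy_Schwarz_hyp_pt:
  assumes x: "hyp_pt n x" and y: "hyp_pt n y"
  shows "1 \<le> - mink n x y"
proof -
  define Sx where "Sx = (\<Sum>i\<in>{1..n}. (x i)\<^sup>2)"
  define Sy where "Sy = (\<Sum>i\<in>{1..n}. (y i)\<^sup>2)"
  define P where "P = (\<Sum>i\<in>{1..n}. x i * y i)"
  have Sx: "Sx = (x 0)\<^sup>2 - 1" and Sy: "Sy = (y 0)\<^sup>2 - 1"
    using x y unfolding hyp_pt_def mink_def Sx_def Sy_def by (simp_all add: power2_eq_square)
  have x1: "1 \<le> x 0" and y1: "1 \<le> y 0"
    using hyp_pt_time_ge_1[OF x] hyp_pt_time_ge_1[OF y] .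
  have xy1: "1 \<le> x 0 * y 0"
    using mult_mono[OF x1 y1] x1 by simp
  have "P\<^sup>2 \<le> Sx * Sy" unfolding Sx_def Sy_def P_def by (rule Cauchy_Schwarz_ineq_sum)
  also have "Sx * Sy = (x 0 * y 0 - 1)\<^sup>2 - (x 0 - y 0)\<^sup>2"
    unfolding Sx Sy by (simp add: power2_eq_square algebra_simps)
  also have "\<dots> \<le> (x 0 * y 0 - 1)\<^sup>2" by simp
  finally have "P\<^sup>2 \<le> (x 0 * y 0 - 1)\<^sup>2" .
  hence "\<bar>P\<bar> \<le> \<bar>x 0 * y 0 - 1\<bar>" by (simp only: abs_le_square_iff)
  with xy1 have "\<bar>P\<bar> \<le> x 0 * y 0 - 1" by simp
  moreover have "mink n x y = - x 0 * y 0 + P" unfolding mink_def P_def by simp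
  ultimately show ?thesis by linarith
qed

lemma hdist_commute: "hdist n x y = hdist n y x"
  unfolding hdist_def by (simp add: mink_commute)

lemma hdist_nonneg: "hyp_pt n x \<Longrightarrow> hyp_pt n y \<Longrightarrow> 0 \<le> hdist n x y"
  unfolding hdist_def using reverse_Cauchy_Schwarz_hyp_pt by simp

lemma hdist_self: "hyp_pt n x \<Longrightarrow> hdist n x x = 0"
  unfolding hdist_def hyp_pt_def by simp

lemma cosh_hdist: "hyp_pt n x \<Longrightarrow> hyp_pt n y \<Longrightarrow> cosh (hdist n x y) = - mink n x y"
  unfolding hdist_def using reverse_Cauchy_Schwarz_hyp_pt by simp

lemma arcosh_le_iff:
  fixes v E :: real
  assumes "1 \<le> v" "0 \<le> E"
  shows "arcosh v \<le> E \<longleftrightarrow> v \<le> cosh E"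
proof -
  have "\<not> arcosh (cosh E) < arcosh v \<longleftrightarrow> \<not> cosh E < v"
    using assms cosh_real_ge_1[of E] by simp
  thus ?thesis using assms by (simp add: not_less arcosh_cosh_real)
qed

lemma le_arcosh_iff:
  fixes v E :: real
  assumes "1 \<le> v" "0 \<le> E"
  shows "E \<le> arcosh v \<longleftrightarrow> cosh E \<le> v"
proof -
  have "\<not> arcosh v < arcosh (cosh E) \<longleftrightarrow> \<not> v < cosh E"
    using assms cosh_real_ge_1[of E] by simp
  thus ?thesis using assms by (simp add: not_less arcosh_cosh_real)
qed

lemma hdist_le_iff:
  assumes "hyp_pt n x" "hyp_pt n y" "0 \<le> E"
  shows "hdist n x y \<le> E \<longleftrightarrow> - mink n x y \<le> cosh E"
  unfolding hdist_def by (rule arcosh_le_iff[OF reverse_Cauchy_Schwarz_hyp_pt[OF assms(1,2)] assms(3)])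

lemma le_hdist_iff:
  assumes "hyp_pt n x" "hyp_pt n y" "0 \<le> E"
  shows "E \<le> hdist n x y \<longleftrightarrow> cosh E \<le> - mink n x y"
  unfolding hdist_def by (rule le_arcosh_iff[OF reverse_Cauchy_Schwarz_hyp_pt[OF assms(1,2)] assms(3)])

lemma has_real_derivative_mink:
  assumes "\<And>i. ((\<lambda>s. X s i) has_real_derivative X' i) (at t within S)"
    and "\<And>i. ((\<lambda>s. Y s i) has_real_derivative Y' i) (at t within S)"
  shows "((\<lambda>s. mink n (X s) (Y s)) has_real_derivative mink n X' (Y t) + mink n (X t) Y') (at t within S)"
proof -
  have prod: "((\<lambda>s. X s i * Y s i) has_real_derivative X' i * Y t i + X t i * Y' i) (at t within S)" for i
    using DERIV_mult[OF assms(1)[of i] assms(2)[of i]] by (simp add: mult.commute)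
  have "((\<lambda>s. - (X s 0 * Y s 0) + (\<Sum>i\<in>{1..n}. X s i * Y s i)) has_real_derivative
      - (X' 0 * Y t 0 + X t 0 * Y' 0) + (\<Sum>i\<in>{1..n}. X' i * Y t i + X t i * Y' i)) (at t within S)"
    by (intro DERIV_add DERIV_minus DERIV_sum prod)
  thus ?thesis unfolding mink_def by (simp add: sum.distrib algebra_simps)
qed

lemma has_real_derivative_mink_right:
  assumes "\<And>i. ((\<lambda>s. Y s i) has_real_derivative Y' i) (at t within S)"
  shows "((\<lambda>s. mink n p (Y s)) has_real_derivative mink n p Y') (at t within S)"
  using has_real_derivative_mink[of "\<lambda>s. p" "\<lambda>i. 0" t S Y Y' n] assms by (simp add: mink_def)

section \<open>Comparison principles for real functions\<close>

lemma derivative_eq_0_if_constant_on_Icc: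
  fixes f :: "real \<Rightarrow> real"
  assumes "a < b" "t \<in> {a..b}" "\<And>s. s \<in> {a..b} \<Longrightarrow> f s = c"
    and "(f has_real_derivative d) (at t within {a..b})"
  shows "d = 0"
proof -
  have "(f has_real_derivative 0) (at t within {a..b})"
    using has_field_derivative_transform_within[of "\<lambda>s. c" 0 t "{a..b}" 1 f] assms(2,3) by simp
  with assms(1,2,4) show ?thesis
    using vector_derivative_unique_within_closed_interval[of a b t f d 0]
    by (simp add: has_real_derivative_iff_has_vector_derivative)
qed

lemma positive_on_Icc_by_first_zero:
  fixes F :: "real \<Rightarrow> real"
  assumes cont: "continuous_on {s..b} F" and pos: "0 < F s"
    and first_zero: "\<And>t. s < t \<Longrightarrow> t \<le> b \<Longrightarrow> (\<forall>\<tau>\<in>{s..<t}. 0 < F \<tau>) \<Longrightarrow> F t = 0 \<Longrightarrow>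
      \<exists>d>0. (F has_real_derivative d) (at t within {s..t})"
    and t1: "t1 \<in> {s..b}"
  shows "0 < F t1"
proof (rule ccontr)
  assume "\<not> 0 < F t1"
  define Z where "Z = {s..t1} \<inter> F -` {..0}"
  have "closed Z"
    unfolding Z_def using t1
    by (intro continuous_closed_preimage continuous_on_subset[OF cont]) auto
  moreover have "t1 \<in> Z" and bdd: "bdd_below Z"
    using t1 \<open>\<not> 0 < F t1\<close> unfolding Z_def by (auto intro: bdd_belowI[of _ s])
  ultimately have "Inf Z \<in> Z" using closed_contains_Inf by blast
  define t where "t = Inf Z"
  have below: "t \<le> z" if "z \<in> Z" for z
    unfolding t_def by (rule cInf_lower[OF that bdd])
  have t: "s \<le> t" "t \<le> t1" "F t \<le> 0"
    using \<open>Inf Z \<in> Z\<close> unfolding Z_def t_def by auto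
  with pos have "s < t" by (cases "s = t") auto
  have pos_before: "\<forall>\<tau>\<in>{s..<t}. 0 < F \<tau>"
    using below t unfolding Z_def by force
  obtain z where z: "s \<le> z" "z \<le> t" "F z = 0"
    using IVT2'[of F t 0 s] t pos \<open>s < t\<close> continuous_on_subset[OF cont, of "{s..t}"] t1 by auto
  moreover from pos_before z have "\<not> z < t" by force
  ultimately have "F t = 0" by simp
  then obtain d where "d > 0" and der: "(F has_real_derivative d) (at t within {s..t})"
    using first_zero[OF \<open>s < t\<close> _ pos_before] t t1 by auto
  then obtain e where e: "e > 0" "\<And>h. h > 0 \<Longrightarrow> t - h \<in> {s..t} \<Longrightarrow> h < e \<Longrightarrow> F (t - h) < F t"
    using has_real_derivative_pos_inc_left[OF der] by blast
  define h where "h = min e (t - s) / 2"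
  have "0 < h" "h < e" "h \<le> t - s" using e \<open>s < t\<close> unfolding h_def by auto
  hence "F (t - h) < 0" using e(2) \<open>F t = 0\<close> by auto
  moreover have "0 < F (t - h)" using pos_before \<open>0 < h\<close> \<open>h \<le> t - s\<close> by auto
  ultimately show False by simp
qed

lemma interior_max_imp_derivatives:
  fixes \<phi> \<phi>' :: "real \<Rightarrow> real"
  assumes t: "a < t" "t < b" and max: "\<And>x. x \<in> {a..b} \<Longrightarrow> \<phi> x \<le> \<phi> t"
    and d1: "\<And>x. a < x \<Longrightarrow> x < b \<Longrightarrow> DERIV \<phi> x :> \<phi>' x" and d2: "DERIV \<phi>' t :> \<phi>''"
  shows "\<phi>' t = 0" and "\<phi>'' \<le> 0"
proof -
  show crit: "\<phi>' t = 0"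
  proof (rule DERIV_local_max[OF d1[OF t]])
    show "0 < min (t - a) (b - t)" using t by simp
    show "\<forall>y. \<bar>t - y\<bar> < min (t - a) (b - t) \<longrightarrow> \<phi> y \<le> \<phi> t"
      using max by (auto simp: abs_less_iff)
  qed
  show "\<phi>'' \<le> 0"
  proof (rule ccontr)
    assume "\<not> \<phi>'' \<le> 0"
    then obtain e where e: "e > 0" "\<And>h. h > 0 \<Longrightarrow> h < e \<Longrightarrow> \<phi>' t < \<phi>' (t + h)"
      using DERIV_pos_inc_right[OF d2] by auto
    define m where "m = min e (b - t)"
    define t' where "t' = t + m / 2"
    have "0 < m" "m \<le> e" "m \<le> b - t" using e t unfolding m_def by auto
    hence t': "t < t'" "t' < b" "t' - t < e" unfolding t'_def by linarith+
    have "\<phi> t < \<phi> t'"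
    proof (rule DERIV_pos_imp_increasing_open[OF \<open>t < t'\<close>])
      fix x assume x: "t < x" "x < t'"
      have "\<phi>' t < \<phi>' (t + (x - t))" using e(2)[of "x - t"] x t' by auto
      thus "\<exists>y. DERIV \<phi> x :> y \<and> 0 < y" using d1[of x] x t t' crit by auto
    next
      show "continuous_on {t..t'} \<phi>"
      proof (rule DERIV_continuous_on)
        fix x assume "x \<in> {t..t'}"
        with d1[of x] t t' show "(\<phi> has_real_derivative \<phi>' x) (at x within {t..t'})"
          by (simp add: has_field_derivative_at_within)
      qed
    qed
    moreover have "\<phi> t' \<le> \<phi> t" using max t t' by auto
    ultimately show False by simp
  qed
qed

lemma height_max_principle:
  fixes \<phi> \<phi>' \<phi>'' :: "real \<Rightarrow> real"
  assumes K: "0 \<le> K" "K < 1" and "a \<le> b"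
    and d1: "\<And>t. t \<in> {a..b} \<Longrightarrow> (\<phi> has_real_derivative \<phi>' t) (at t within {a..b})"
    and d2: "\<And>t. t \<in> {a..b} \<Longrightarrow> (\<phi>' has_real_derivative \<phi>'' t) (at t within {a..b})"
    and ode: "\<And>t. t \<in> {a..b} \<Longrightarrow> (\<phi>'' t - \<phi> t)\<^sup>2 \<le> K\<^sup>2 * (1 + (\<phi> t)\<^sup>2 - (\<phi>' t)\<^sup>2)"
    and ends: "\<phi> a \<le> 0" "\<phi> b \<le> 0"
    and t: "t \<in> {a..b}"
  shows "\<phi> t \<le> K / sqrt (1 - K\<^sup>2)"
proof -
  have K2: "K\<^sup>2 < 1" using K by (simp add: abs_square_less_1)
  hence c: "0 < sqrt (1 - K\<^sup>2)" by simp
  have "continuous_on {a..b} \<phi>" using d1 by (rule DERIV_continuous_on)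
  then obtain t0 where t0: "t0 \<in> {a..b}" and max: "\<And>x. x \<in> {a..b} \<Longrightarrow> \<phi> x \<le> \<phi> t0"
    using continuous_attains_sup[OF compact_Icc _ \<open>continuous_on {a..b} \<phi>\<close>] \<open>a \<le> b\<close> by auto
  define M where "M = \<phi> t0"
  show ?thesis
  proof (cases "M \<le> 0")
    case True
    moreover have "0 \<le> K / sqrt (1 - K\<^sup>2)" using K c by simp
    ultimately show ?thesis using max[OF t] unfolding M_def by linarith
  next
    case False
    hence "a < t0" "t0 < b" using t0 ends unfolding M_def by (auto simp: le_less)
    have D1: "DERIV \<phi> x :> \<phi>' x" if "a < x" "x < b" for x
      using d1[of x] at_within_Icc_at[OF that] that by simp
    have D2: "DERIV \<phi>' t0 :> \<phi>'' t0"
      using d2[OF t0] at_within_Icc_at[OF \<open>a < t0\<close> \<open>t0 < b\<close>] by simp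
    note crit = interior_max_imp_derivatives[OF \<open>a < t0\<close> \<open>t0 < b\<close> max D1 D2]
    have "\<phi>' t0 = 0" and "\<phi>'' t0 \<le> 0" using crit by blast+
    have "M\<^sup>2 \<le> (\<phi>'' t0 - \<phi> t0)\<^sup>2"
      using \<open>\<phi>'' t0 \<le> 0\<close> False unfolding M_def by (simp add: power_mono power2_commute)
    also have "\<dots> \<le> K\<^sup>2 * (1 + M\<^sup>2)" using ode[OF t0] \<open>\<phi>' t0 = 0\<close> unfolding M_def by simp
    finally have "(M * sqrt (1 - K\<^sup>2))\<^sup>2 \<le> K\<^sup>2"
      using K2 by (simp add: power_mult_distrib algebra_simps)
    hence "M * sqrt (1 - K\<^sup>2) \<le> K" using \<open>0 \<le> K\<close> by (rule power2_le_imp_le)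
    hence "M \<le> K / sqrt (1 - K\<^sup>2)" using c by (simp add: pos_le_divide_eq)
    thus ?thesis using max[OF t] unfolding M_def by simp
  qed
qed

lemma cosh_comparison_upper:
  fixes h h' :: "real \<Rightarrow> real"
  assumes "s \<le> t"
    and deriv: "\<And>\<tau>. \<tau> \<in> {s..t} \<Longrightarrow> (h has_real_derivative h' \<tau>) (at \<tau> within {s..t})"
    and slope: "\<And>\<tau>. \<tau> \<in> {s..t} \<Longrightarrow> (h' \<tau>)\<^sup>2 \<le> (h \<tau>)\<^sup>2 - 1"
    and start: "h s \<le> 1"
  shows "h t \<le> cosh (t - s)"
proof -
  have cont: "continuous_on {s..t} h" using deriv by (rule DERIV_continuous_on)
  have below: "h t < cosh (e + (1 + e) * (t - s))" if "0 < e" for e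
  proof -
    define F where "F \<tau> = cosh (e + (1 + e) * (\<tau> - s)) - h \<tau>" for \<tau>
    have "0 < F t"
    proof (rule positive_on_Icc_by_first_zero[of s t F t])
      show "continuous_on {s..t} F" unfolding F_def by (intro continuous_intros cont)
      have "1 < cosh e" using cosh_real_nonneg_less_iff[of 0 e] \<open>0 < e\<close> by simp
      thus "0 < F s" unfolding F_def using start by simp
    next
      fix t1 assume t1: "s < t1" "t1 \<le> t" and "\<forall>\<tau>\<in>{s..<t1}. 0 < F \<tau>" and "F t1 = 0"
      define E where "E = e + (1 + e) * (t1 - s)"
      have "0 < E" unfolding E_def using \<open>0 < e\<close> t1 by (simp add: add_pos_nonneg)
      have t1': "t1 \<in> {s..t}" using t1 by simp
      have "h t1 = cosh E" using \<open>F t1 = 0\<close> unfolding F_def E_def by simp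
      hence "(h' t1)\<^sup>2 \<le> (sinh E)\<^sup>2" using slope[OF t1'] by (simp add: sinh_square_eq)
      hence "h' t1 \<le> sinh E" using \<open>0 < E\<close> by (simp add: abs_le_square_iff[symmetric])
      moreover have "0 < e * sinh E" using \<open>0 < e\<close> \<open>0 < E\<close> by simp
      ultimately have "0 < (1 + e) * sinh E - h' t1" by (simp add: algebra_simps)
      moreover have "(h has_real_derivative h' t1) (at t1 within {s..t1})"
        using deriv[OF t1'] by (rule DERIV_subset) (use t1 in auto)
      hence "(F has_real_derivative (1 + e) * sinh E - h' t1) (at t1 within {s..t1})"
        unfolding F_def E_def by (auto intro!: derivative_eq_intros)
      ultimately show "\<exists>d>0. (F has_real_derivative d) (at t1 within {s..t1})" by blast
    qed (use \<open>s \<le> t\<close> in auto)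
    thus ?thesis unfolding F_def by simp
  qed
  have "((\<lambda>e. cosh (e + (1 + e) * (t - s))) \<longlongrightarrow> cosh (0 + (1 + 0) * (t - s))) (at_right 0)"
    by (intro tendsto_intros)
  moreover have "\<forall>\<^sub>F e in at_right 0. h t \<le> cosh (e + (1 + e) * (t - s))"
    unfolding eventually_at_right_field using below by (intro exI[of _ 1]) (auto intro: less_imp_le)
  ultimately show ?thesis by (simp add: tendsto_lowerbound)
qed

lemma angle_equality_imp_second_derivative_gt:
  fixes h h' h'' K \<mu> :: real
  assumes h: "1 < h" and h': "h' = \<mu> * sqrt (h\<^sup>2 - 1)"
    and ode: "(h'' - h)\<^sup>2 \<le> K\<^sup>2 * (h\<^sup>2 - 1 - h'\<^sup>2)"
    and K: "0 \<le> K" and \<mu>: "\<mu>\<^sup>2 < 1 - K\<^sup>2"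
  shows "\<mu>\<^sup>2 * h < h''"
proof -
  define r where "r = sqrt (h\<^sup>2 - 1)"
  define m where "m = sqrt (1 - \<mu>\<^sup>2)"
  have "1 < h\<^sup>2" using h by (simp add: less_1_mult power2_eq_square)
  hence r: "0 < r" "r\<^sup>2 = h\<^sup>2 - 1" unfolding r_def by simp_all
  have "r < h" by (rule power_less_imp_less_base[of r 2]) (use r h in auto)
  have "\<mu>\<^sup>2 < 1" using \<mu> zero_le_power2[of K] by linarith
  hence m: "0 < m" "m\<^sup>2 = 1 - \<mu>\<^sup>2" unfolding m_def by simp_all
  have "K < m" by (rule power_less_imp_less_base[of K 2]) (use m \<mu> in auto)
  have "h\<^sup>2 - 1 - h'\<^sup>2 = m\<^sup>2 * r\<^sup>2"
    unfolding h' r_def[symmetric] r(2)[symmetric] m(2) by (simp add: power_mult_distrib algebra_simps)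
  with ode have "\<bar>h'' - h\<bar>\<^sup>2 \<le> (m * (K * r))\<^sup>2" by (simp add: power_mult_distrib mult_ac)
  hence "\<bar>h'' - h\<bar> \<le> m * (K * r)"
    by (rule power2_le_imp_le) (use K m r in simp)
  moreover have "K * r < m * h"
  proof -
    have "K * r \<le> K * h" using K \<open>r < h\<close> by (simp add: mult_left_mono)
    also have "\<dots> < m * h" using \<open>K < m\<close> h by simp
    finally show ?thesis .
  qed
  hence "m * (K * r) < m * (m * h)" using m by simp
  moreover have "\<mu>\<^sup>2 * h = h - m * (m * h)"
  proof -
    have "\<mu>\<^sup>2 = 1 - m\<^sup>2" using m(2) by simp
    hence "\<mu>\<^sup>2 * h = (1 - m\<^sup>2) * h" by (simp only:)
    also have "\<dots> = h - m * (m * h)" by (simp add: power2_eq_square left_diff_distrib)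
    finally show ?thesis .
  qed
  ultimately show ?thesis by linarith
qed

lemma has_real_derivative_sqrt_sq_minus_1:
  assumes "(h has_real_derivative h') (at t within S)" and "1 < h t"
  shows "((\<lambda>\<tau>. sqrt ((h \<tau>)\<^sup>2 - 1)) has_real_derivative h t * h' / sqrt ((h t)\<^sup>2 - 1)) (at t within S)"
proof -
  have "1 < (h t)\<^sup>2" using assms(2) by (simp add: less_1_mult power2_eq_square)
  have "((\<lambda>\<tau>. (h \<tau>)\<^sup>2 - 1) has_real_derivative 2 * h t * h') (at t within S)"
    using DERIV_diff[OF DERIV_power[OF assms(1), of 2] DERIV_const[of 1]] by (simp add: mult_ac)
  from DERIV_chain2[OF DERIV_real_sqrt this] \<open>1 < (h t)\<^sup>2\<close> show ?thesis
    by (simp add: field_simps)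
qed

text \<open>With \<open>h = cosh d\<close>, the angle condition says \<open>d' > \<mu>\<close>; where it first fails, the
  curvature bound forces it to be increasing.\<close>

lemma angle_condition_persists:
  fixes h h' h'' :: "real \<Rightarrow> real"
  assumes "s \<le> t"
    and d1: "\<And>\<tau>. \<tau> \<in> {s..t} \<Longrightarrow> (h has_real_derivative h' \<tau>) (at \<tau> within {s..t})"
    and d2: "\<And>\<tau>. \<tau> \<in> {s..t} \<Longrightarrow> (h' has_real_derivative h'' \<tau>) (at \<tau> within {s..t})"
    and ode: "\<And>\<tau>. \<tau> \<in> {s..t} \<Longrightarrow> (h'' \<tau> - h \<tau>)\<^sup>2 \<le> K\<^sup>2 * ((h \<tau>)\<^sup>2 - 1 - (h' \<tau>)\<^sup>2)"
    and defect: "\<And>\<tau>. \<tau> \<in> {s..t} \<Longrightarrow> 0 \<le> (h \<tau>)\<^sup>2 - 1 - (h' \<tau>)\<^sup>2"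
    and K: "0 \<le> K" and \<mu>: "0 < \<mu>" "\<mu>\<^sup>2 < 1 - K\<^sup>2"
    and start: "1 < h s" "\<mu> * sqrt ((h s)\<^sup>2 - 1) < h' s"
    and \<tau>: "\<tau> \<in> {s..t}"
  shows "\<mu> * sqrt ((h \<tau>)\<^sup>2 - 1) < h' \<tau>"
proof -
  define F where "F \<tau> = h' \<tau> - \<mu> * sqrt ((h \<tau>)\<^sup>2 - 1)" for \<tau>
  have cont: "continuous_on {s..t} h" "continuous_on {s..t} h'"
    using d1 d2 by (blast intro: DERIV_continuous_on)+
  have "0 < F \<tau>"
  proof (rule positive_on_Icc_by_first_zero[of s t F \<tau>])
    show "continuous_on {s..t} F" unfolding F_def by (intro continuous_intros cont)
    show "0 < F s" unfolding F_def using start by simp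
  next
    fix t1 assume t1: "s < t1" "t1 \<le> t" and pos: "\<forall>\<tau>\<in>{s..<t1}. 0 < F \<tau>" and "F t1 = 0"
    have t1': "t1 \<in> {s..t}" using t1 by simp
    have "h s < h t1"
    proof (rule DERIV_pos_imp_increasing_open[OF \<open>s < t1\<close>])
      fix x assume x: "s < x" "x < t1"
      have "x \<in> {s..t}" using x t1 by simp
      hence "0 \<le> (h x)\<^sup>2 - 1"
        using defect zero_le_power2[of "h' x"] by (metis diff_ge_0_iff_ge order.trans)
      hence "0 \<le> \<mu> * sqrt ((h x)\<^sup>2 - 1)" using \<mu> by simp
      moreover have "0 < F x" using pos x by simp
      ultimately have "0 < h' x" unfolding F_def by simp
      moreover have "DERIV h x :> h' x" using d1[of x] at_within_Icc_at[of s x t] x t1 by simp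
      ultimately show "\<exists>y. DERIV h x :> y \<and> 0 < y" by blast
    next
      show "continuous_on {s..t1} h" using continuous_on_subset[OF cont(1)] t1 by simp
    qed
    with start have h1: "1 < h t1" by simp
    define r where "r = sqrt ((h t1)\<^sup>2 - 1)"
    have r: "0 < r" using h1 unfolding r_def by (simp add: less_1_mult power2_eq_square)
    have h't1: "h' t1 = \<mu> * r" using \<open>F t1 = 0\<close> unfolding F_def r_def by simp
    have "0 < h'' t1 - \<mu>\<^sup>2 * h t1"
      using angle_equality_imp_second_derivative_gt[OF h1 _ ode[OF t1'] K \<mu>(2)] h't1
      unfolding r_def by simp
    moreover have "(F has_real_derivative h'' t1 - \<mu>\<^sup>2 * h t1) (at t1 within {s..t1})"
    proof -
      have D1: "(h has_real_derivative h' t1) (at t1 within {s..t1})"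
        and D2: "(h' has_real_derivative h'' t1) (at t1 within {s..t1})"
        using DERIV_subset[OF d1[OF t1'], of "{s..t1}"] DERIV_subset[OF d2[OF t1'], of "{s..t1}"] t1
        by auto
      from has_real_derivative_sqrt_sq_minus_1[OF D1 h1]
      have "((\<lambda>\<tau>. sqrt ((h \<tau>)\<^sup>2 - 1)) has_real_derivative h t1 * h' t1 / r) (at t1 within {s..t1})"
        unfolding r_def .
      from DERIV_diff[OF D2 DERIV_cmult[OF this, of \<mu>]] show ?thesis
        unfolding F_def h't1 using r(1) by (simp add: power2_eq_square mult_ac)
    qed
    ultimately show "\<exists>d>0. (F has_real_derivative d) (at t1 within {s..t1})" by blast
  qed (use \<tau> in auto)
  thus ?thesis unfolding F_def by simp
qed

lemma cosh_comparison_lower: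
  fixes h h' :: "real \<Rightarrow> real"
  assumes "s \<le> t"
    and deriv: "\<And>\<tau>. \<tau> \<in> {s..t} \<Longrightarrow> (h has_real_derivative h' \<tau>) (at \<tau> within {s..t})"
    and slope: "\<And>\<tau>. \<tau> \<in> {s..t} \<Longrightarrow> \<mu> * sqrt ((h \<tau>)\<^sup>2 - 1) < h' \<tau>"
    and "0 < \<mu>" and start: "1 < h s"
  shows "cosh (\<mu> * (t - s)) < h t"
proof -
  define F where "F \<tau> = h \<tau> - cosh (\<mu> * (\<tau> - s))" for \<tau>
  have "0 < F t"
  proof (rule positive_on_Icc_by_first_zero[of s t F t])
    show "continuous_on {s..t} F"
      unfolding F_def using deriv by (intro continuous_intros DERIV_continuous_on)
    show "0 < F s" unfolding F_def using start by simp
  next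
    fix t1 assume t1: "s < t1" "t1 \<le> t" and "\<forall>\<tau>\<in>{s..<t1}. 0 < F \<tau>" and "F t1 = 0"
    define E where "E = \<mu> * (t1 - s)"
    have "0 < E" unfolding E_def using \<open>0 < \<mu>\<close> t1 by simp
    have t1': "t1 \<in> {s..t}" using t1 by simp
    have "h t1 = cosh E" using \<open>F t1 = 0\<close> unfolding F_def E_def by simp
    hence "sqrt ((h t1)\<^sup>2 - 1) = sinh E" using \<open>0 < E\<close> by (simp add: sinh_square_eq[symmetric])
    hence "0 < h' t1 - sinh E * \<mu>" using slope[OF t1'] by (simp add: mult.commute)
    moreover have "(h has_real_derivative h' t1) (at t1 within {s..t1})"
      using deriv[OF t1'] by (rule DERIV_subset) (use t1 in auto)
    hence "(F has_real_derivative h' t1 - sinh E * \<mu>) (at t1 within {s..t1})"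
      unfolding F_def E_def by (auto intro!: derivative_eq_intros)
    ultimately show "\<exists>d>0. (F has_real_derivative d) (at t1 within {s..t1})" by blast
  qed (use \<open>s \<le> t\<close> in auto)
  thus ?thesis unfolding F_def by simp
qed

section \<open>Curves of bounded geodesic curvature\<close>

locale curvature_bounded_curve =
  fixes n :: nat and K a b :: real and \<gamma> \<gamma>' \<gamma>'' :: "real \<Rightarrow> nat \<Rightarrow> real"
  assumes K_nonneg: "0 \<le> K" and K_less_1: "K < 1" and a_less_b: "a < b"
    and on_hyperboloid: "\<forall>t\<in>{a..b}. hyp_pt n (\<gamma> t)"
    and velocity: "\<forall>t\<in>{a..b}. \<forall>i. ((\<lambda>s. \<gamma> s i) has_real_derivative \<gamma>' t i) (at t within {a..b})"
    and acceleration: "\<forall>t\<in>{a..b}. \<forall>i. ((\<lambda>s. \<gamma>' s i) has_real_derivative \<gamma>'' t i) (at t within {a..b})"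
    and unit_speed: "\<forall>t\<in>{a..b}. mink n (\<gamma>' t) (\<gamma>' t) = 1"
    and curvature_le: "\<forall>t\<in>{a..b}. geod_curv n \<gamma> \<gamma>'' t \<le> K"
begin

lemma mink_curve_self: "t \<in> {a..b} \<Longrightarrow> mink n (\<gamma> t) (\<gamma> t) = -1"
  using on_hyperboloid unfolding hyp_pt_def by auto

lemma mink_curve_velocity:
  assumes t: "t \<in> {a..b}"
  shows "mink n (\<gamma> t) (\<gamma>' t) = 0"
proof -
  have "((\<lambda>s. mink n (\<gamma> s) (\<gamma> s)) has_real_derivative
      mink n (\<gamma>' t) (\<gamma> t) + mink n (\<gamma> t) (\<gamma>' t)) (at t within {a..b})"
    using velocity t by (intro has_real_derivative_mink) auto
  from derivative_eq_0_if_constant_on_Icc[OF a_less_b t mink_curve_self this]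
  show ?thesis by (simp add: mink_commute[of n "\<gamma>' t"])
qed

lemma mink_acceleration_velocity:
  assumes t: "t \<in> {a..b}"
  shows "mink n (\<gamma>'' t) (\<gamma>' t) = 0"
proof -
  have "((\<lambda>s. mink n (\<gamma>' s) (\<gamma>' s)) has_real_derivative
      mink n (\<gamma>'' t) (\<gamma>' t) + mink n (\<gamma>' t) (\<gamma>'' t)) (at t within {a..b})"
    using acceleration t by (intro has_real_derivative_mink) auto
  from derivative_eq_0_if_constant_on_Icc[OF a_less_b t _ this] unit_speed
  show ?thesis by (simp add: mink_commute[of n "\<gamma>' t"])
qed

lemma mink_acceleration_curve:
  assumes t: "t \<in> {a..b}"
  shows "mink n (\<gamma>'' t) (\<gamma> t) = -1"
proof -
  have "((\<lambda>s. mink n (\<gamma> s) (\<gamma>' s)) has_real_derivative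
      mink n (\<gamma>' t) (\<gamma>' t) + mink n (\<gamma> t) (\<gamma>'' t)) (at t within {a..b})"
    using velocity acceleration t by (intro has_real_derivative_mink) auto
  from derivative_eq_0_if_constant_on_Icc[OF a_less_b t mink_curve_velocity this]
  show ?thesis using unit_speed t by (simp add: mink_commute[of n "\<gamma> t"])
qed

lemma tang_proj_acceleration:
  "t \<in> {a..b} \<Longrightarrow> tang_proj n (\<gamma> t) (\<gamma>'' t) = (\<lambda>i. \<gamma>'' t i - \<gamma> t i)"
  unfolding tang_proj_def using mink_acceleration_curve by simp

lemma
  assumes t: "t \<in> {a..b}"
  shows height_second_derivative_bound:
      "(mink n p (\<gamma>'' t) - mink n p (\<gamma> t))\<^sup>2
        \<le> K\<^sup>2 * (mink n p p + (mink n p (\<gamma> t))\<^sup>2 - (mink n p (\<gamma>' t))\<^sup>2)"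
    and height_defect_nonneg:
      "0 \<le> mink n p p + (mink n p (\<gamma> t))\<^sup>2 - (mink n p (\<gamma>' t))\<^sup>2"
proof -
  define T where "T = (\<lambda>i. \<gamma>'' t i - \<gamma> t i)"
  have T\<gamma>: "mink n T (\<gamma> t) = 0"
    unfolding T_def using mink_acceleration_curve[OF t] mink_curve_self[OF t] by simp
  have T\<gamma>': "mink n T (\<gamma>' t) = 0"
    unfolding T_def using mink_acceleration_velocity[OF t] mink_curve_velocity[OF t] by simp
  have "sqrt (mink n T T) \<le> K"
    using curvature_le[rule_format, OF t]
    unfolding geod_curv_def tnorm_def tang_proj_acceleration[OF t] T_def .
  moreover have "0 \<le> mink n T T" by (rule mink_self_nonneg_if_orthogonal[OF mink_curve_self[OF t] T\<gamma>])
  ultimately have TT: "mink n T T \<le> K\<^sup>2" by (metis real_sqrt_le_iff real_sqrt_pow2 sqrt_le_D)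
  note frame = mink_curve_self[OF t] mink_curve_velocity[OF t] unit_speed[rule_format, OF t] T\<gamma> T\<gamma>' TT
  have "mink n p (\<gamma>'' t) - mink n p (\<gamma> t) = mink n p T" unfolding T_def by simp
  thus "(mink n p (\<gamma>'' t) - mink n p (\<gamma> t))\<^sup>2
      \<le> K\<^sup>2 * (mink n p p + (mink n p (\<gamma> t))\<^sup>2 - (mink n p (\<gamma>' t))\<^sup>2)"
    using mink_sq_le_orthogonal_component[OF frame] by simp
  show "0 \<le> mink n p p + (mink n p (\<gamma> t))\<^sup>2 - (mink n p (\<gamma>' t))\<^sup>2"
    by (rule orthogonal_component_nonneg[OF frame])
qed

lemma has_real_derivative_height:
  "t \<in> {a..b} \<Longrightarrow> ((\<lambda>s. mink n p (\<gamma> s)) has_real_derivative mink n p (\<gamma>' t)) (at t within {a..b})"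
  using velocity by (intro has_real_derivative_mink_right) auto

lemma has_real_derivative_height':
  "t \<in> {a..b} \<Longrightarrow> ((\<lambda>s. mink n p (\<gamma>' s)) has_real_derivative mink n p (\<gamma>'' t)) (at t within {a..b})"
  using acceleration by (intro has_real_derivative_mink_right) auto

lemma has_real_derivative_neg_height_within:
  assumes "{s..t} \<subseteq> {a..b}" and "\<tau> \<in> {s..t}"
  shows "((\<lambda>\<sigma>. - mink n p (\<gamma> \<sigma>)) has_real_derivative - mink n p (\<gamma>' \<tau>)) (at \<tau> within {s..t})"
    and "((\<lambda>\<sigma>. - mink n p (\<gamma>' \<sigma>)) has_real_derivative - mink n p (\<gamma>'' \<tau>)) (at \<tau> within {s..t})"
  using DERIV_subset[OF DERIV_minus[OF has_real_derivative_height] assms(1)]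
    DERIV_subset[OF DERIV_minus[OF has_real_derivative_height'] assms(1)] assms by blast+

lemma K_sq_less_1: "K\<^sup>2 < 1"
  using K_nonneg K_less_1 by (simp add: abs_square_less_1)

lemma hdist_curve_le:
  assumes s: "s \<in> {a..b}" and t: "t \<in> {a..b}" and "s \<le> t"
  shows "hdist n (\<gamma> s) (\<gamma> t) \<le> t - s"
proof -
  define h where "h \<tau> = - mink n (\<gamma> s) (\<gamma> \<tau>)" for \<tau>
  define h' where "h' \<tau> = - mink n (\<gamma> s) (\<gamma>' \<tau>)" for \<tau>
  have sub: "{s..t} \<subseteq> {a..b}" using s t by auto
  have "h t \<le> cosh (t - s)"
  proof (rule cosh_comparison_upper[OF \<open>s \<le> t\<close>])
    show "(h has_real_derivative h' \<tau>) (at \<tau> within {s..t})" if "\<tau> \<in> {s..t}" for \<tau>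
      unfolding h_def h'_def using sub that by (rule has_real_derivative_neg_height_within)
    show "(h' \<tau>)\<^sup>2 \<le> (h \<tau>)\<^sup>2 - 1" if "\<tau> \<in> {s..t}" for \<tau>
      using height_defect_nonneg[of \<tau> "\<gamma> s"] mink_curve_self[OF s] sub that
      unfolding h_def h'_def by auto
    show "h s \<le> 1" unfolding h_def using mink_curve_self[OF s] by simp
  qed
  thus ?thesis
    unfolding h_def using hdist_le_iff on_hyperboloid s t \<open>s \<le> t\<close> by simp
qed

text \<open>Comparing with a point \<open>p\<close> slightly behind \<open>\<gamma> s\<close> on the geodesic tangent to
  \<open>\<gamma>\<close> keeps \<open>cosh (dist p \<gamma>)\<close> away from its singular value \<open>1\<close>.\<close>

lemma cosh_lt_from_point_behind:
  assumes s: "s \<in> {a..b}" and t: "t \<in> {a..b}" and "s \<le> t"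
    and \<mu>: "0 < \<mu>" "\<mu>\<^sup>2 < 1 - K\<^sup>2" and "0 < e"
  shows "cosh (\<mu> * (t - s)) < cosh e * - mink n (\<gamma> s) (\<gamma> t) + sinh e * mink n (\<gamma>' s) (\<gamma> t)"
proof -
  define p where "p = (\<lambda>i. cosh e * \<gamma> s i - sinh e * \<gamma>' s i)"
  define h where "h \<tau> = - mink n p (\<gamma> \<tau>)" for \<tau>
  define h' where "h' \<tau> = - mink n p (\<gamma>' \<tau>)" for \<tau>
  define h'' where "h'' \<tau> = - mink n p (\<gamma>'' \<tau>)" for \<tau>
  have sub: "{s..t} \<subseteq> {a..b}" using s t by auto
  have \<gamma>\<gamma>': "mink n (\<gamma> s) (\<gamma>' s) = 0" "mink n (\<gamma>' s) (\<gamma> s) = 0"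
    using mink_curve_velocity[OF s] mink_commute by metis+
  have pp: "mink n p p = -1" unfolding p_def using \<gamma>\<gamma>' mink_curve_self[OF s] unit_speed s
    by (simp add: algebra_simps power2_eq_square[symmetric] cosh_square_eq)
  have hs: "h s = cosh e" and h's: "h' s = sinh e"
    unfolding h_def h'_def p_def using \<gamma>\<gamma>' mink_curve_self[OF s] unit_speed s by simp_all
  note d1 = has_real_derivative_neg_height_within(1)[OF sub, of _ p, folded h_def h'_def]
  note d2 = has_real_derivative_neg_height_within(2)[OF sub, of _ p, folded h'_def h''_def]
  have ode: "(h'' \<tau> - h \<tau>)\<^sup>2 \<le> K\<^sup>2 * ((h \<tau>)\<^sup>2 - 1 - (h' \<tau>)\<^sup>2)"
    and defect: "0 \<le> (h \<tau>)\<^sup>2 - 1 - (h' \<tau>)\<^sup>2" if "\<tau> \<in> {s..t}" for \<tau>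
    using height_second_derivative_bound[of \<tau> p] height_defect_nonneg[of \<tau> p] pp sub that
    unfolding h_def h'_def h''_def by (auto simp: power2_commute)
  have "\<mu>\<^sup>2 < 1\<^sup>2" using \<mu>(2) zero_le_power2[of K] unfolding power_one by linarith
  hence "\<mu> < 1" by (rule power_less_imp_less_base) simp
  have "1 < h s" using hs cosh_real_nonneg_less_iff[of 0 e] \<open>0 < e\<close> by simp
  moreover have "\<mu> * sqrt ((h s)\<^sup>2 - 1) < h' s"
    using \<open>\<mu> < 1\<close> \<open>0 < e\<close> unfolding hs h's by (simp add: sinh_square_eq[symmetric])
  ultimately have "\<mu> * sqrt ((h \<tau>)\<^sup>2 - 1) < h' \<tau>" if "\<tau> \<in> {s..t}" for \<tau>
    using angle_condition_persists[OF \<open>s \<le> t\<close> d1 d2 ode defect K_nonneg \<mu> _ _ that] by blast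
  from cosh_comparison_lower[OF \<open>s \<le> t\<close> d1 this \<mu>(1) \<open>1 < h s\<close>]
  show ?thesis unfolding h_def p_def by simp
qed

lemma cosh_le_neg_mink_curve:
  assumes s: "s \<in> {a..b}" and t: "t \<in> {a..b}" and "s \<le> t"
    and \<mu>: "0 < \<mu>" "\<mu> < sqrt (1 - K\<^sup>2)"
  shows "cosh (\<mu> * (t - s)) \<le> - mink n (\<gamma> s) (\<gamma> t)"
proof -
  have "\<mu>\<^sup>2 < 1 - K\<^sup>2"
    using power_strict_mono[OF \<mu>(2), of 2] \<mu>(1) K_sq_less_1 by simp
  note below = cosh_lt_from_point_behind[OF s t \<open>s \<le> t\<close> \<mu>(1) this]
  have "((\<lambda>e. cosh e * - mink n (\<gamma> s) (\<gamma> t) + sinh e * mink n (\<gamma>' s) (\<gamma> t))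
      \<longlongrightarrow> cosh 0 * - mink n (\<gamma> s) (\<gamma> t) + sinh 0 * mink n (\<gamma>' s) (\<gamma> t)) (at_right 0)"
    by (intro tendsto_intros)
  moreover have "\<forall>\<^sub>F e in at_right 0.
      cosh (\<mu> * (t - s)) \<le> cosh e * - mink n (\<gamma> s) (\<gamma> t) + sinh e * mink n (\<gamma>' s) (\<gamma> t)"
    unfolding eventually_at_right_field using below by (intro exI[of _ 1]) (auto intro: less_imp_le)
  ultimately show ?thesis by (simp add: tendsto_lowerbound)
qed

lemma hdist_curve_ge:
  assumes s: "s \<in> {a..b}" and t: "t \<in> {a..b}" and "s \<le> t"
  shows "sqrt (1 - K\<^sup>2) * (t - s) \<le> hdist n (\<gamma> s) (\<gamma> t)"
proof (cases "s = t")
  case True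
  thus ?thesis using hdist_nonneg on_hyperboloid t by simp
next
  case False
  with \<open>s \<le> t\<close> have "0 < t - s" by simp
  show ?thesis
  proof (rule dense_le_bounded[of 0])
    show "0 < sqrt (1 - K\<^sup>2) * (t - s)" using K_sq_less_1 \<open>0 < t - s\<close> by simp
  next
    fix w assume w: "0 < w" "w < sqrt (1 - K\<^sup>2) * (t - s)"
    have "0 < w / (t - s)" "w / (t - s) < sqrt (1 - K\<^sup>2)"
      using w \<open>0 < t - s\<close> by (simp_all add: divide_less_eq)
    from cosh_le_neg_mink_curve[OF s t \<open>s \<le> t\<close> this]
    have "cosh w \<le> - mink n (\<gamma> s) (\<gamma> t)" using \<open>0 < t - s\<close> by simp
    thus "w \<le> hdist n (\<gamma> s) (\<gamma> t)"
      using le_hdist_iff on_hyperboloid s t w \<open>0 < t - s\<close> by simp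
  qed
qed

lemma quasi_geodesic_curve: "quasi_geodesic (hdist n) (1 / sqrt (1 - K\<^sup>2)) {a..b} \<gamma>"
  unfolding quasi_geodesic_def
proof (intro ballI conjI)
  fix s t assume s: "s \<in> {a..b}" and t: "t \<in> {a..b}"
  have c: "0 < sqrt (1 - K\<^sup>2)" "sqrt (1 - K\<^sup>2) \<le> 1" using K_sq_less_1 by simp_all
  have "sqrt (1 - K\<^sup>2) * \<bar>s - t\<bar> \<le> hdist n (\<gamma> s) (\<gamma> t)"
    using hdist_curve_ge[OF s t] hdist_curve_ge[OF t s] hdist_commute[of n "\<gamma> s" "\<gamma> t"]
    by (cases "s \<le> t") auto
  thus "1 / (1 / sqrt (1 - K\<^sup>2)) * \<bar>s - t\<bar> \<le> hdist n (\<gamma> s) (\<gamma> t)" by simp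
  have "hdist n (\<gamma> s) (\<gamma> t) \<le> \<bar>s - t\<bar>"
    using hdist_curve_le[OF s t] hdist_curve_le[OF t s] hdist_commute[of n "\<gamma> s" "\<gamma> t"]
    by (cases "s \<le> t") auto
  also have "\<dots> \<le> 1 / sqrt (1 - K\<^sup>2) * \<bar>s - t\<bar>"
    using mult_right_mono[of 1 "1 / sqrt (1 - K\<^sup>2)" "\<bar>s - t\<bar>"] c by simp
  finally show "hdist n (\<gamma> s) (\<gamma> t) \<le> 1 / sqrt (1 - K\<^sup>2) * \<bar>s - t\<bar>" .
qed


lemma spacelike_height_le:
  assumes "mink n p p = 1" and "mink n p (\<gamma> a) \<le> 0" "mink n p (\<gamma> b) \<le> 0" and t: "t \<in> {a..b}"
  shows "mink n p (\<gamma> t) \<le> K / sqrt (1 - K\<^sup>2)"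
proof (rule height_max_principle[OF K_nonneg K_less_1 less_imp_le[OF a_less_b] _ _ _ _ _ t])
  show "(mink n p (\<gamma>'' \<tau>) - mink n p (\<gamma> \<tau>))\<^sup>2
      \<le> K\<^sup>2 * (1 + (mink n p (\<gamma> \<tau>))\<^sup>2 - (mink n p (\<gamma>' \<tau>))\<^sup>2)" if "\<tau> \<in> {a..b}" for \<tau>
    using height_second_derivative_bound[OF that, of p] assms(1) by simp
qed (use assms has_real_derivative_height has_real_derivative_height' in auto)

end

section \<open>Geodesic segments\<close>

text \<open>The unit tangent at \<open>x\<close> of the geodesic from \<open>x\<close> to \<open>y\<close>, so that the geodesic
  is \<open>\<sigma> \<mapsto> cosh \<sigma> x + sinh \<sigma> u\<close>.\<close>

definition geodesic_direction :: "nat \<Rightarrow> (nat \<Rightarrow> real) \<Rightarrow> (nat \<Rightarrow> real) \<Rightarrow> (nat \<Rightarrow> real)" where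
  "geodesic_direction n x y = (\<lambda>i. (y i - cosh (hdist n x y) * x i) / sinh (hdist n x y))"

context
  fixes n :: nat and x y :: "nat \<Rightarrow> real"
  assumes x: "hyp_pt n x" and y: "hyp_pt n y" and dist_pos: "0 < hdist n x y"
begin

private lemma mink_ends:
  "mink n x x = -1" "mink n y y = -1"
  "mink n x y = - cosh (hdist n x y)" "mink n y x = - cosh (hdist n x y)"
  using x y cosh_hdist[OF x y] mink_commute[of n y x] unfolding hyp_pt_def by auto

lemma mink_geodesic_direction_start: "mink n (geodesic_direction n x y) x = 0"
  unfolding geodesic_direction_def using mink_ends by simp

lemma mink_geodesic_direction_self: "mink n (geodesic_direction n x y) (geodesic_direction n x y) = 1"
proof -
  have "(cosh (hdist n x y))\<^sup>2 - 1 = (sinh (hdist n x y))\<^sup>2" by (simp add: sinh_square_eq)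
  moreover have "sinh (hdist n x y) \<noteq> 0" using dist_pos by simp
  ultimately show ?thesis
    unfolding geodesic_direction_def using mink_ends by (simp add: power2_eq_square field_simps)
qed

lemma mink_geodesic_direction_end: "mink n (geodesic_direction n x y) y = sinh (hdist n x y)"
proof -
  have "(cosh (hdist n x y))\<^sup>2 - 1 = (sinh (hdist n x y))\<^sup>2" by (simp add: sinh_square_eq)
  moreover have "sinh (hdist n x y) \<noteq> 0" using dist_pos by simp
  ultimately show ?thesis
    unfolding geodesic_direction_def using mink_ends by (simp add: power2_eq_square field_simps)
qed

lemma geodesic_end_eq:
  "y = (\<lambda>i. cosh (hdist n x y) * x i + sinh (hdist n x y) * geodesic_direction n x y i)"
  unfolding geodesic_direction_def using dist_pos by (auto simp: field_simps)

text \<open>A geodesic segment is determined by its pairings: \<open>g \<sigma> - cosh \<sigma> x - sinh \<sigma> u\<close> is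
  orthogonal to \<open>x\<close> and null, hence orthogonal to everything.\<close>

lemma mink_geodesic_segment:
  assumes g: "hyp_geodesic_segment n x y g" and \<sigma>: "\<sigma> \<in> {0..hdist n x y}"
  shows "mink n (g \<sigma>) p = cosh \<sigma> * mink n x p + sinh \<sigma> * mink n (geodesic_direction n x y) p"
proof -
  define L where "L = hdist n x y"
  define u where "u = geodesic_direction n x y"
  have ends: "0 \<in> {0..L}" "L \<in> {0..L}" and \<sigma>': "\<sigma> \<in> {0..L}" using dist_pos \<sigma> unfolding L_def by auto
  have seg: "g 0 = x" "g L = y" "\<And>s. s \<in> {0..L} \<Longrightarrow> hyp_pt n (g s)"
    "\<And>s t. s \<in> {0..L} \<Longrightarrow> t \<in> {0..L} \<Longrightarrow> hdist n (g s) (g t) = \<bar>s - t\<bar>"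
    using g unfolding hyp_geodesic_segment_def L_def by auto
  have g\<sigma>: "hyp_pt n (g \<sigma>)" using seg(3) \<sigma>' .
  have "hdist n (g \<sigma>) x = \<sigma>" "hdist n (g \<sigma>) y = L - \<sigma>"
    using seg(4)[OF \<sigma>' ends(1)] seg(4)[OF \<sigma>' ends(2)] seg(1,2) \<sigma>' by auto
  hence gx: "mink n (g \<sigma>) x = - cosh \<sigma>" and gy: "mink n (g \<sigma>) y = - cosh (L - \<sigma>)"
    using cosh_hdist[OF g\<sigma> x] cosh_hdist[OF g\<sigma> y] by auto
  have gu: "mink n (g \<sigma>) u = sinh \<sigma>"
  proof -
    have "mink n (g \<sigma>) u = (cosh L * cosh \<sigma> - cosh (L - \<sigma>)) / sinh L"
      unfolding u_def geodesic_direction_def L_def[symmetric] using gx gy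
      by (simp add: mink_commute[of n "g \<sigma>"] field_simps)
    also have "\<dots> = sinh \<sigma>" using dist_pos unfolding L_def by (simp add: cosh_diff)
    finally show ?thesis .
  qed
  define w where "w = (\<lambda>i. g \<sigma> i - cosh \<sigma> * x i - sinh \<sigma> * u i)"
  have wx: "mink n w x = 0" and wu: "mink n w u = 0"
    unfolding w_def u_def using gx gu mink_ends mink_geodesic_direction_start mink_geodesic_direction_self
      mink_commute[of n x "geodesic_direction n x y"] by (simp_all add: u_def)
  have "mink n w (\<lambda>i. g \<sigma> i - cosh \<sigma> * x i - sinh \<sigma> * u i) = mink n w (g \<sigma>)"
    using wx wu by simp
  hence "mink n w w = mink n w (g \<sigma>)" unfolding w_def[symmetric] .
  also have "\<dots> = -1 + (cosh \<sigma>)\<^sup>2 - (sinh \<sigma>)\<^sup>2"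
    unfolding w_def using g\<sigma> gx gu mink_commute[of n x "g \<sigma>"] mink_commute[of n u "g \<sigma>"]
    unfolding hyp_pt_def by (simp add: power2_eq_square)
  finally have ww: "mink n w w = 0" by (simp add: cosh_square_eq)
  define q where "q = (\<lambda>i. p i + mink n p x * x i)"
  have qx: "mink n q x = 0" unfolding q_def using mink_ends by simp
  have "(mink n w q)\<^sup>2 \<le> 0"
    using mink_Cauchy_Schwarz_if_orthogonal[OF mink_ends(1) wx qx] ww by simp
  moreover have "mink n w q = mink n w p" unfolding q_def using wx by simp
  ultimately have "mink n w p = 0" by simp
  thus ?thesis unfolding w_def u_def by (simp add: mink_commute[of n _ p])
qed

end

text \<open>On a geodesic with unit tangent \<open>u\<close> at \<open>x\<close>, the point nearest to \<open>z\<close> is at the parameter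
  \<open>\<sigma>\<close> with \<open>tanh \<sigma> = U / X\<close>, where \<open>X = -\<langle>x,z\<rangle>\<close> and \<open>U = \<langle>u,z\<rangle>\<close>.\<close>

lemma nearest_point_parameter:
  fixes X U L :: real
  assumes "0 \<le> U" "U < X" "U * cosh L \<le> X * sinh L"
  shows "\<exists>\<sigma>\<in>{0..L}. X * cosh \<sigma> - U * sinh \<sigma> = sqrt (X\<^sup>2 - U\<^sup>2)"
proof -
  define m where "m = sqrt (X\<^sup>2 - U\<^sup>2)"
  have "U\<^sup>2 < X\<^sup>2" using assms by (simp add: power_strict_mono)
  hence m: "0 < m" "m\<^sup>2 = X\<^sup>2 - U\<^sup>2" unfolding m_def by simp_all
  define \<sigma> where "\<sigma> = arsinh (U / m)"
  have sinh: "sinh \<sigma> = U / m" unfolding \<sigma>_def by simp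
  have cosh: "cosh \<sigma> = X / m"
  proof -
    have "cosh \<sigma> = sqrt ((U / m)\<^sup>2 + 1)" unfolding \<sigma>_def by (rule cosh_arsinh_real)
    also have "(U / m)\<^sup>2 + 1 = (X / m)\<^sup>2" using m by (simp add: field_simps)
    also have "sqrt \<dots> = X / m" using m assms by simp
    finally show ?thesis .
  qed
  have "0 \<le> sinh \<sigma>" unfolding sinh using assms m by simp
  hence "0 \<le> \<sigma>" by simp
  moreover have "\<sigma> \<le> L"
  proof -
    have "0 \<le> X * sinh L" using assms(1,3) by (smt (verit) cosh_real_pos mult_nonneg_nonneg)
    hence "0 \<le> sinh L" using assms(1,2) by (simp add: zero_le_mult_iff)
    have "(U * cosh L)\<^sup>2 \<le> (X * sinh L)\<^sup>2" using assms by (intro power_mono) auto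
    hence "U\<^sup>2 * (1 + (sinh L)\<^sup>2) \<le> (m\<^sup>2 + U\<^sup>2) * (sinh L)\<^sup>2"
      using m by (simp add: power_mult_distrib cosh_square_eq add.commute)
    hence "U\<^sup>2 \<le> (m * sinh L)\<^sup>2" by (simp add: algebra_simps power_mult_distrib)
    hence "U \<le> m * sinh L" by (rule power2_le_imp_le) (use m \<open>0 \<le> sinh L\<close> in simp)
    hence "sinh \<sigma> \<le> sinh L" unfolding sinh using m by (simp add: divide_le_eq mult.commute)
    thus ?thesis by simp
  qed
  moreover have "X * cosh \<sigma> - U * sinh \<sigma> = m"
    unfolding sinh cosh using m by (simp add: field_simps power2_eq_square)
  ultimately show ?thesis unfolding m_def by auto
qed

lemma exists_parameter_cosh_dist_le:
  fixes X U L \<rho> :: real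
  assumes "0 \<le> L" and R: "0 \<le> X\<^sup>2 - U\<^sup>2 - 1" "X\<^sup>2 - U\<^sup>2 - 1 \<le> \<rho>\<^sup>2"
    and start: "- U \<le> \<rho>" and finish: "cosh L * U - sinh L * X \<le> \<rho>" and "0 \<le> X"
  shows "\<exists>\<sigma>\<in>{0..L}. (X * cosh \<sigma> - U * sinh \<sigma>)\<^sup>2 \<le> 1 + 2 * \<rho>\<^sup>2"
proof -
  consider "U \<le> 0" | "0 \<le> cosh L * U - sinh L * X" | "0 < U" "U * cosh L < X * sinh L"
    by (smt (verit) mult.commute)
  thus ?thesis
  proof cases
    case 1
    have "U\<^sup>2 \<le> \<rho>\<^sup>2" using 1 start power_mono[of "- U" \<rho> 2] by simp
    hence "(X * cosh 0 - U * sinh 0)\<^sup>2 \<le> 1 + 2 * \<rho>\<^sup>2" using R by simp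
    thus ?thesis using \<open>0 \<le> L\<close> by force
  next
    case 2
    define V where "V = cosh L * U - sinh L * X"
    have "V\<^sup>2 \<le> \<rho>\<^sup>2" using 2 finish power_mono[of V \<rho> 2] unfolding V_def by simp
    have "(X * cosh L - U * sinh L)\<^sup>2 = (X\<^sup>2 - U\<^sup>2) * ((cosh L)\<^sup>2 - (sinh L)\<^sup>2) + V\<^sup>2"
      unfolding V_def by (simp add: power2_eq_square algebra_simps)
    also have "\<dots> = X\<^sup>2 - U\<^sup>2 + V\<^sup>2" by (simp add: cosh_square_eq)
    finally have "(X * cosh L - U * sinh L)\<^sup>2 \<le> 1 + 2 * \<rho>\<^sup>2" using R \<open>V\<^sup>2 \<le> \<rho>\<^sup>2\<close> by simp
    thus ?thesis using \<open>0 \<le> L\<close> by force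
  next
    case 3
    have "U\<^sup>2 < X\<^sup>2" using R by simp
    hence "U < X" using \<open>0 \<le> X\<close> by (simp add: power_less_imp_less_base)
    then obtain \<sigma> where "\<sigma> \<in> {0..L}" and "X * cosh \<sigma> - U * sinh \<sigma> = sqrt (X\<^sup>2 - U\<^sup>2)"
      using nearest_point_parameter 3 by (metis less_imp_le)
    moreover have "(sqrt (X\<^sup>2 - U\<^sup>2))\<^sup>2 \<le> 1 + 2 * \<rho>\<^sup>2" using R zero_le_power2[of \<rho>] by simp
    ultimately show ?thesis by (metis)
  qed
qed

section \<open>Hausdorff distance to the geodesic segment\<close>

lemma hausdorff_dist_wrt_le:
  assumes "A \<noteq> {}" "B \<noteq> {}" and nonneg: "\<And>p q. p \<in> A \<Longrightarrow> q \<in> B \<Longrightarrow> 0 \<le> d p q"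
    and AB: "\<And>p. p \<in> A \<Longrightarrow> \<exists>q\<in>B. d p q \<le> D" and BA: "\<And>q. q \<in> B \<Longrightarrow> \<exists>p\<in>A. d p q \<le> D"
  shows "hausdorff_dist_wrt d A B \<le> D"
proof -
  have "(INF q\<in>B. d p q) \<le> D" if "p \<in> A" for p
    using AB[OF that] nonneg[OF that] by (meson bdd_belowI2 cINF_lower2)
  moreover have "(INF p\<in>A. d p q) \<le> D" if "q \<in> B" for q
    using BA[OF that] nonneg[OF _ that] by (meson bdd_belowI2 cINF_lower2)
  ultimately show ?thesis
    unfolding hausdorff_dist_wrt_def using assms(1,2) by (simp add: cSUP_least)
qed

definition hausdorff_bound :: "real \<Rightarrow> real" where
  "hausdorff_bound K = arcosh (sqrt (1 + 2 * (K / sqrt (1 - K\<^sup>2))\<^sup>2))"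

lemma hausdorff_bound_nonneg: "0 \<le> hausdorff_bound K"
  unfolding hausdorff_bound_def by simp

lemma hausdorff_bound_0: "hausdorff_bound 0 = 0"
  unfolding hausdorff_bound_def by simp

lemma continuous_on_hausdorff_bound: "continuous_on {0..<1} hausdorff_bound"
proof -
  have "sqrt (1 - K\<^sup>2) \<noteq> 0" if "K \<in> {0..<1}" for K :: real
    using that abs_square_less_1[of K] by simp
  hence "continuous_on {0..<1} (\<lambda>K::real. sqrt (1 + 2 * (K / sqrt (1 - K\<^sup>2))\<^sup>2))"
    by (intro continuous_intros) auto
  thus ?thesis unfolding hausdorff_bound_def by (rule continuous_on_arcosh') simp
qed

locale curve_and_segment = curvature_bounded_curve +
  fixes g :: "real \<Rightarrow> nat \<Rightarrow> real"
  assumes segment: "hyp_geodesic_segment n (\<gamma> a) (\<gamma> b) g"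
begin

abbreviation "len \<equiv> hdist n (\<gamma> a) (\<gamma> b)"
abbreviation "dir \<equiv> geodesic_direction n (\<gamma> a) (\<gamma> b)"
abbreviation "\<rho> \<equiv> K / sqrt (1 - K\<^sup>2)"

text \<open>Coordinates of \<open>\<gamma> \<tau>\<close> in the plane of the segment: \<open>X = cosh\<close> of the distance to
  \<open>\<gamma> a\<close>, and \<open>U\<close> the component along the direction of the segment.\<close>

abbreviation "X \<tau> \<equiv> - mink n (\<gamma> a) (\<gamma> \<tau>)"
abbreviation "U \<tau> \<equiv> mink n dir (\<gamma> \<tau>)"

lemma len_pos: "0 < len"
proof -
  have "sqrt (1 - K\<^sup>2) * (b - a) \<le> len" using hdist_curve_ge[of a b] a_less_b by simp
  moreover have "0 < sqrt (1 - K\<^sup>2) * (b - a)" using K_sq_less_1 a_less_b by simp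
  ultimately show ?thesis by linarith
qed

lemma hyp_pt_ends: "hyp_pt n (\<gamma> a)" "hyp_pt n (\<gamma> b)"
  using on_hyperboloid a_less_b by auto

lemmas dir_start = mink_geodesic_direction_start[OF hyp_pt_ends len_pos]
lemmas dir_self = mink_geodesic_direction_self[OF hyp_pt_ends len_pos]
lemmas dir_end = mink_geodesic_direction_end[OF hyp_pt_ends len_pos]
lemmas end_eq = geodesic_end_eq[OF hyp_pt_ends len_pos]

lemma mink_start_self: "mink n (\<gamma> a) (\<gamma> a) = -1"
  using mink_curve_self a_less_b by simp

lemma mink_start_end: "mink n (\<gamma> a) (\<gamma> b) = - cosh len"
  using cosh_hdist[OF hyp_pt_ends] by simp

lemma coordinates_defect_bounds:
  assumes \<tau>: "\<tau> \<in> {a..b}"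
  shows "0 \<le> (X \<tau>)\<^sup>2 - (U \<tau>)\<^sup>2 - 1" and "(X \<tau>)\<^sup>2 - (U \<tau>)\<^sup>2 - 1 \<le> \<rho>\<^sup>2"
proof -
  define R where "R = (X \<tau>)\<^sup>2 - (U \<tau>)\<^sup>2 - 1"
  define w where "w = (\<lambda>i. \<gamma> \<tau> i - X \<tau> * \<gamma> a i - U \<tau> * dir i)"
  have wa: "mink n w (\<gamma> a) = 0" and wdir: "mink n w dir = 0"
    unfolding w_def using dir_start dir_self mink_start_self
    by (simp_all add: mink_commute[of n "\<gamma> \<tau>"] mink_commute[of n "\<gamma> a" dir])
  have "mink n w (\<gamma> \<tau>) = R"
    unfolding w_def R_def using mink_curve_self[OF \<tau>] by (simp add: power2_eq_square)
  moreover have "mink n w (\<lambda>i. \<gamma> \<tau> i - X \<tau> * \<gamma> a i - U \<tau> * dir i) = mink n w (\<gamma> \<tau>)"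
    using wa wdir by simp
  ultimately have ww: "mink n w w = R" unfolding w_def[symmetric] by simp
  have "0 \<le> R" using mink_self_nonneg_if_orthogonal[OF mink_start_self wa] ww by simp
  thus "0 \<le> (X \<tau>)\<^sup>2 - (U \<tau>)\<^sup>2 - 1" unfolding R_def .
  show "(X \<tau>)\<^sup>2 - (U \<tau>)\<^sup>2 - 1 \<le> \<rho>\<^sup>2"
  proof (cases "R = 0")
    case True
    thus ?thesis unfolding R_def by simp
  next
    case False
    with \<open>0 \<le> R\<close> have "0 < R" by simp
    define \<nu> where "\<nu> = (\<lambda>i. w i / sqrt R)"
    have "mink n \<nu> \<nu> = 1" unfolding \<nu>_def using ww \<open>0 < R\<close> by simp
    moreover have "mink n \<nu> (\<gamma> a) = 0" unfolding \<nu>_def using wa by simp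
    moreover have "mink n \<nu> (\<gamma> b) = 0" unfolding \<nu>_def using wa wdir by (subst end_eq) simp
    ultimately have "mink n \<nu> (\<gamma> \<tau>) \<le> \<rho>" using spacelike_height_le \<tau> by simp
    moreover have "mink n \<nu> (\<gamma> \<tau>) = sqrt R"
      unfolding \<nu>_def using \<open>mink n w (\<gamma> \<tau>) = R\<close> \<open>0 < R\<close> by (simp add: real_div_sqrt)
    ultimately have "(sqrt R)\<^sup>2 \<le> \<rho>\<^sup>2" using \<open>0 < R\<close> by (intro power_mono) auto
    thus ?thesis using \<open>0 \<le> R\<close> unfolding R_def by simp
  qed
qed

lemma coordinates_end_bounds:
  assumes \<tau>: "\<tau> \<in> {a..b}"
  shows "- U \<tau> \<le> \<rho>" and "cosh len * U \<tau> - sinh len * X \<tau> \<le> \<rho>"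
proof -
  have "mink n (\<lambda>i. - dir i) (\<gamma> \<tau>) \<le> \<rho>"
    using dir_start dir_self dir_end len_pos \<tau> by (intro spacelike_height_le) simp_all
  thus "- U \<tau> \<le> \<rho>" by simp
  define \<nu> where "\<nu> = (\<lambda>i. sinh len * \<gamma> a i + cosh len * dir i)"
  have "mink n \<nu> \<nu> = (cosh len)\<^sup>2 - (sinh len)\<^sup>2"
    unfolding \<nu>_def using dir_start dir_self mink_start_self mink_commute[of n "\<gamma> a" dir]
    by (simp add: power2_eq_square)
  moreover have "mink n \<nu> (\<gamma> a) = - sinh len"
    unfolding \<nu>_def using dir_start mink_start_self by simp
  moreover have "mink n \<nu> (\<gamma> b) = 0"
    unfolding \<nu>_def using dir_end mink_start_end by simp
  ultimately have "mink n \<nu> (\<gamma> \<tau>) \<le> \<rho>"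
    using len_pos \<tau> by (intro spacelike_height_le) (simp_all add: cosh_square_eq)
  thus "cosh len * U \<tau> - sinh len * X \<tau> \<le> \<rho>" unfolding \<nu>_def by simp
qed

lemma hyp_pt_segment: "\<sigma> \<in> {0..len} \<Longrightarrow> hyp_pt n (g \<sigma>)"
  using segment unfolding hyp_geodesic_segment_def by blast

lemma neg_mink_curve_segment:
  assumes "\<sigma> \<in> {0..len}"
  shows "- mink n (\<gamma> \<tau>) (g \<sigma>) = X \<tau> * cosh \<sigma> - U \<tau> * sinh \<sigma>"
  using mink_geodesic_segment[OF hyp_pt_ends len_pos segment assms, of "\<gamma> \<tau>"]
  by (simp add: mink_commute[of n "\<gamma> \<tau>"])

lemma hdist_segment_le_hausdorff_bound:
  assumes \<tau>: "\<tau> \<in> {a..b}" and \<sigma>: "\<sigma> \<in> {0..len}"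
    and close: "(X \<tau> * cosh \<sigma> - U \<tau> * sinh \<sigma>)\<^sup>2 \<le> 1 + 2 * \<rho>\<^sup>2"
  shows "hdist n (\<gamma> \<tau>) (g \<sigma>) \<le> hausdorff_bound K"
proof -
  have "1 \<le> sqrt (1 + 2 * \<rho>\<^sup>2)" by simp
  hence "cosh (hausdorff_bound K) = sqrt (1 + 2 * \<rho>\<^sup>2)" unfolding hausdorff_bound_def by simp
  moreover have "- mink n (\<gamma> \<tau>) (g \<sigma>) \<le> sqrt (1 + 2 * \<rho>\<^sup>2)"
    using close unfolding neg_mink_curve_segment[OF \<sigma>] by (rule real_le_rsqrt)
  ultimately show ?thesis
    using hdist_le_iff[OF _ hyp_pt_segment[OF \<sigma>] hausdorff_bound_nonneg] on_hyperboloid \<tau> by simp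
qed

lemma curve_near_segment:
  assumes \<tau>: "\<tau> \<in> {a..b}"
  shows "\<exists>\<sigma>\<in>{0..len}. hdist n (\<gamma> \<tau>) (g \<sigma>) \<le> hausdorff_bound K"
proof -
  have "0 \<le> X \<tau>" using reverse_Cauchy_Schwarz_hyp_pt hyp_pt_ends on_hyperboloid \<tau> by force
  then obtain \<sigma> where "\<sigma> \<in> {0..len}" "(X \<tau> * cosh \<sigma> - U \<tau> * sinh \<sigma>)\<^sup>2 \<le> 1 + 2 * \<rho>\<^sup>2"
    using exists_parameter_cosh_dist_le[OF less_imp_le[OF len_pos] coordinates_defect_bounds[OF \<tau>]
        coordinates_end_bounds[OF \<tau>]] by blast
  thus ?thesis using hdist_segment_le_hausdorff_bound[OF \<tau>] by blast
qed

lemma segment_near_curve: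
  assumes \<sigma>: "\<sigma> \<in> {0..len}"
  shows "\<exists>\<tau>\<in>{a..b}. hdist n (\<gamma> \<tau>) (g \<sigma>) \<le> hausdorff_bound K"
proof -
  define \<nu> where "\<nu> = (\<lambda>i. sinh \<sigma> * \<gamma> a i + cosh \<sigma> * dir i)"
  define \<theta> where "\<theta> \<tau> = mink n \<nu> (\<gamma> \<tau>)" for \<tau>
  have "continuous_on {a..b} \<theta>"
    unfolding \<theta>_def using has_real_derivative_height by (rule DERIV_continuous_on)
  moreover have "\<theta> a \<le> 0" unfolding \<theta>_def \<nu>_def using dir_start mink_start_self \<sigma> by simp
  moreover have "\<theta> b = sinh (len - \<sigma>)"
    unfolding \<theta>_def \<nu>_def using dir_end mink_start_end by (simp add: sinh_diff mult.commute)
  hence "0 \<le> \<theta> b" using \<sigma> by simp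
  ultimately obtain \<tau> where \<tau>: "\<tau> \<in> {a..b}" and "\<theta> \<tau> = 0"
    using IVT'[of \<theta> a 0 b] a_less_b by auto
  hence "U \<tau> * cosh \<sigma> - X \<tau> * sinh \<sigma> = 0" unfolding \<theta>_def \<nu>_def by (simp add: algebra_simps)
  moreover have "(X \<tau> * cosh \<sigma> - U \<tau> * sinh \<sigma>)\<^sup>2
      = ((X \<tau>)\<^sup>2 - (U \<tau>)\<^sup>2) * ((cosh \<sigma>)\<^sup>2 - (sinh \<sigma>)\<^sup>2) + (U \<tau> * cosh \<sigma> - X \<tau> * sinh \<sigma>)\<^sup>2"
    by (simp add: power2_eq_square algebra_simps)
  ultimately have "(X \<tau> * cosh \<sigma> - U \<tau> * sinh \<sigma>)\<^sup>2 = ((X \<tau>)\<^sup>2 - (U \<tau>)\<^sup>2) * ((cosh \<sigma>)\<^sup>2 - (sinh \<sigma>)\<^sup>2)"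
    by simp
  also have "\<dots> = (X \<tau>)\<^sup>2 - (U \<tau>)\<^sup>2" by (simp add: cosh_square_eq)
  also have "\<dots> \<le> 1 + 2 * \<rho>\<^sup>2"
    using coordinates_defect_bounds(2)[OF \<tau>] zero_le_power2[of \<rho>] by linarith
  finally show ?thesis using hdist_segment_le_hausdorff_bound[OF \<tau> \<sigma>] \<tau> by blast
qed

lemma hausdorff_dist_segment_le:
  "hausdorff_dist_wrt (hdist n) (\<gamma> ` {a..b}) (g ` {0..len}) \<le> hausdorff_bound K"
proof (rule hausdorff_dist_wrt_le)
  show "\<gamma> ` {a..b} \<noteq> {}" "g ` {0..len} \<noteq> {}" using a_less_b len_pos by auto
  show "0 \<le> hdist n p q" if "p \<in> \<gamma> ` {a..b}" "q \<in> g ` {0..len}" for p q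
    using that hdist_nonneg on_hyperboloid segment unfolding hyp_geodesic_segment_def by auto
qed (use curve_near_segment segment_near_curve in blast)+

end

theorem mainTheorem12:
  shows "\<exists>f :: real \<Rightarrow> real.
    continuous_on {0..<1} f \<and> (\<forall>x\<in>{0..<1}. f x \<ge> 0) \<and> f 0 = 0 \<and>
    (\<forall>(n::nat) (K::real) (a::real) (b::real)
       (\<gamma> :: real \<Rightarrow> nat \<Rightarrow> real) (\<gamma>' :: real \<Rightarrow> nat \<Rightarrow> real) (\<gamma>'' :: real \<Rightarrow> nat \<Rightarrow> real).
       0 \<le> K \<and> K < 1 \<and> a \<le> b \<and>
       (\<forall>t\<in>{a..b}. hyp_pt n (\<gamma> t)) \<and>
       (\<forall>t\<in>{a..b}. \<forall>i. ((\<lambda>s. \<gamma> s i) has_real_derivative \<gamma>' t i) (at t within {a..b})) \<and>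
       (\<forall>t\<in>{a..b}. \<forall>i. ((\<lambda>s. \<gamma>' s i) has_real_derivative \<gamma>'' t i) (at t within {a..b})) \<and>
       (\<forall>t\<in>{a..b}. mink n (\<gamma>' t) (\<gamma>' t) = 1) \<and>
       (\<forall>t\<in>{a..b}. geod_curv n \<gamma> \<gamma>'' t \<le> K)
       \<longrightarrow>
       quasi_geodesic (hdist n) (1 / sqrt (1 - K\<^sup>2)) {a..b} \<gamma> \<and>
       (\<forall>g. hyp_geodesic_segment n (\<gamma> a) (\<gamma> b) g \<longrightarrow>
          hausdorff_dist_wrt (hdist n) (\<gamma> ` {a..b}) (g ` {0..hdist n (\<gamma> a) (\<gamma> b)}) \<le> f K))"
proof (intro exI[of _ hausdorff_bound] conjI ballI allI impI continuous_on_hausdorff_bound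
    hausdorff_bound_nonneg hausdorff_bound_0, goal_cases)
  case (1 n K a b \<gamma> \<gamma>' \<gamma>'')
  show ?case
  proof (cases "a = b")
    case True
    with 1 show ?thesis by (simp add: quasi_geodesic_def hdist_self)
  next
    case False
    with 1 interpret curvature_bounded_curve n K a b \<gamma> \<gamma>' \<gamma>'' by unfold_locales auto
    show ?thesis by (rule quasi_geodesic_curve)
  qed
next
  case (2 n K a b \<gamma> \<gamma>' \<gamma>'' g)
  show ?case
  proof (cases "a = b")
    case True
    with 2 show ?thesis
      by (simp add: hyp_geodesic_segment_def hausdorff_dist_wrt_def hdist_self hausdorff_bound_nonneg)
  next
    case False
    with 2 interpret curve_and_segment n K a b \<gamma> \<gamma>' \<gamma>'' g by unfold_locales auto
    show ?thesis by (rule hausdorff_dist_segment_le)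
  qed
qed

end
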